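(* For all integers $m,n$ with $1\le m\le n$ and $n\ge 2$, \[mn-\frac{m^2(m-1)}{n-1}\ \le\ \operatorname{scp}(K_n-K_m)\ \le\ (2m-1)(n-m)+1.\]
   Context: $K_n-K_m$ denotes the graph obtained from the complete graph $K_n$ by deleting all edges (but no vertices) among a fixed set of $m$ of its vertices. A clique partition of a graph $G$ is a family $\mathcal{C}$ of cliques of $G$ such that every edge has both endpoints in exactly one member of $\mathcal{C}$; $\operatorname{scp}(G)$ is the minimum of $\sum_{C\in\mathcal{C}}|C|$ over all clique partitions $\mathcal{C}$ of $G$. *)

theory Defs
  imports Complex_Main
begin

text \<open>Simple graphs on a finite vertex set V with a symmetric irreflexive edge predicate E.\<close>

definition is_clique :: "'a set \<Rightarrow> ('a \<Rightarrow> 'a \<Rightarrow> bool) \<Rightarrow> 'a set \<Rightarrow> bool" where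
  "is_clique V E C \<longleftrightarrow> C \<subseteq> V \<and> (\<forall>u\<in>C. \<forall>v\<in>C. u \<noteq> v \<longrightarrow> E u v)"

definition is_clique_partition :: "'a set \<Rightarrow> ('a \<Rightarrow> 'a \<Rightarrow> bool) \<Rightarrow> 'a set set \<Rightarrow> bool" where
  "is_clique_partition V E \<C> \<longleftrightarrow>
     (\<forall>C\<in>\<C>. is_clique V E C) \<and>
     (\<forall>u\<in>V. \<forall>v\<in>V. E u v \<longrightarrow> (\<exists>!C. C \<in> \<C> \<and> u \<in> C \<and> v \<in> C))"

definition scp :: "'a set \<Rightarrow> ('a \<Rightarrow> 'a \<Rightarrow> bool) \<Rightarrow> nat" where
  "scp V E = (LEAST s. \<exists>\<C>. is_clique_partition V E \<C> \<and> s = (\<Sum>C\<in>\<C>. card C))"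

text \<open>K_n - K_m on vertices {0..<n}; the fixed set of m vertices is {0..<m}.\<close>
definition Kn_minus_Km_edge :: "nat \<Rightarrow> nat \<Rightarrow> nat \<Rightarrow> nat \<Rightarrow> bool" where
  "Kn_minus_Km_edge n m u v \<longleftrightarrow> u < n \<and> v < n \<and> u \<noteq> v \<and> \<not> (u < m \<and> v < m)"

end

theory Submission
  imports Defs
begin

text \<open>Let M = {0..<m} be the independent set and R = {m..<n}. A clique C of a clique partition
  meets M in a \<le> 1 vertices and R in b vertices. Every edge between M and R, and every ordered
  pair of distinct vertices of R, lies in exactly one clique, so \<Sum> a b = m (n - m) and
  \<Sum> b (b - 1) = (n - m) (n - m - 1). With \<lambda> = m / (n - 1) each clique satisfies
  a + b \<ge> (1 + 2 \<lambda> - \<lambda>^2) a b - \<lambda>^2 b (b - 1), the difference being (1 - \<lambda> b)^2 when a = 1;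
  summing over the partition gives the lower bound. The upper bound is witnessed by the clique
  {0} \<union> R together with the single edges {i, j} for 1 \<le> i < m \<le> j < n.\<close>

lemma scp_le:
  assumes "is_clique_partition V E \<C>"
  shows "scp V E \<le> (\<Sum>C\<in>\<C>. card C)"
  unfolding scp_def by (rule Least_le) (use assms in blast)

lemma scp_attained:
  assumes "is_clique_partition V E \<C>"
  obtains \<C>' where "is_clique_partition V E \<C>'" and "scp V E = (\<Sum>C\<in>\<C>'. card C)"
proof -
  have "\<exists>\<C>'. is_clique_partition V E \<C>' \<and> scp V E = (\<Sum>C\<in>\<C>'. card C)"
    unfolding scp_def by (rule LeastI[of _ "\<Sum>C\<in>\<C>. card C"]) (use assms in blast)
  then show ?thesis
    using that by blast
qed

lemma finite_clique_partition:
  assumes "is_clique_partition V E \<C>" "finite V"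
  shows "finite \<C>"
proof -
  have "\<C> \<subseteq> Pow V"
    using assms(1) unfolding is_clique_partition_def is_clique_def by auto
  then show ?thesis
    using assms(2) by (simp add: finite_subset)
qed

lemma sum_card_edge_pairs_clique_partition:
  assumes P: "is_clique_partition V E \<C>" and "finite V"
    and edges: "S \<subseteq> {(u, v). u \<in> V \<and> v \<in> V \<and> E u v}"
  shows "(\<Sum>C\<in>\<C>. card (S \<inter> C \<times> C)) = card S"
proof -
  have unique: "\<exists>!C. C \<in> \<C> \<and> u \<in> C \<and> v \<in> C" if "(u, v) \<in> S" for u v
  proof -
    have "u \<in> V" "v \<in> V" "E u v"
      using edges that by auto
    then show ?thesis
      using P unfolding is_clique_partition_def by simp
  qed
  have "S = (\<Union>C\<in>\<C>. S \<inter> C \<times> C)"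
  proof (intro equalityI subsetI)
    fix p assume "p \<in> S"
    moreover obtain u v where "p = (u, v)"
      by (cases p)
    ultimately obtain C where "C \<in> \<C>" "u \<in> C" "v \<in> C"
      using unique by blast
    with \<open>p \<in> S\<close> \<open>p = (u, v)\<close> show "p \<in> (\<Union>C\<in>\<C>. S \<inter> C \<times> C)"
      by blast
  qed blast
  moreover have "card (\<Union>C\<in>\<C>. S \<inter> C \<times> C) = (\<Sum>C\<in>\<C>. card (S \<inter> C \<times> C))"
  proof (rule card_UN_disjoint)
    show "finite \<C>"
      using finite_clique_partition[OF P \<open>finite V\<close>] .
    show "\<forall>C\<in>\<C>. finite (S \<inter> C \<times> C)"
      using edges \<open>finite V\<close> by (auto intro: finite_subset[of _ "V \<times> V"])
    show "\<forall>C\<in>\<C>. \<forall>C'\<in>\<C>. C \<noteq> C' \<longrightarrow> (S \<inter> C \<times> C) \<inter> (S \<inter> C' \<times> C') = {}"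
    proof (intro ballI impI)
      fix C C' assume "C \<in> \<C>" "C' \<in> \<C>" "C \<noteq> C'"
      then show "(S \<inter> C \<times> C) \<inter> (S \<inter> C' \<times> C') = {}"
        using unique by fast
    qed
  qed
  ultimately show ?thesis
    by simp
qed

lemma card_clique_Int_independent_le_1:
  assumes "is_clique V E C" and "\<forall>u\<in>I. \<forall>v\<in>I. \<not> E u v"
  shows "card (C \<inter> I) \<le> 1"
proof (cases "finite (C \<inter> I)")
  case True
  have "\<forall>u\<in>C \<inter> I. \<forall>v\<in>C \<inter> I. u = v"
    using assms unfolding is_clique_def by (meson IntD1 IntD2)
  then show ?thesis
    using card_le_Suc0_iff_eq[OF True] by simp
qed simp

lemma card_offdiag:
  assumes "finite A"
  shows "card (A \<times> A - Id) = card A * card A - card A"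
proof -
  have "A \<times> A \<inter> Id = (\<lambda>x. (x, x)) ` A"
    by auto
  moreover have "card ((\<lambda>x. (x, x)) ` A) = card A"
    by (rule card_image) (auto intro: inj_onI)
  ultimately show ?thesis
    using assms by (simp add: card_Diff_subset_Int card_cartesian_product)
qed

lemma clique_size_quadratic_bound:
  fixes l :: real and a b :: nat
  assumes "a \<le> 1"
  shows "(1 + 2 * l - l^2) * (real a * real b) - l^2 * (real b * real b - real b)
    \<le> real a + real b"
proof (cases "a = 0")
  case True
  have "real b \<le> real b * real b"
    by (cases b) auto
  then have "0 \<le> l^2 * (real b * real b - real b)"
    by simp
  then show ?thesis
    using True by simp
next
  case False
  with assms have "a = 1"
    by simp
  have "0 \<le> (1 - l * real b)^2"
    by simp
  then show ?thesis
    using \<open>a = 1\<close> by (simp add: power2_eq_square algebra_simps)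
qed

lemma of_nat_square_diff_self: "real (k * k - k) = real k * real k - real k"
  by (simp add: of_nat_diff le_square)

lemma lower_bound_identity:
  fixes m K :: real
  assumes "K \<noteq> 0"
  shows "(1 + 2 * (m / K) - (m / K)^2) * (m * (K + 1 - m))
      - (m / K)^2 * ((K + 1 - m) * (K + 1 - m) - (K + 1 - m))
    = m * (K + 1) - m^2 * (m - 1) / K"
  using assms by (simp add: field_simps power2_eq_square)

lemma Kn_minus_Km_clique_partition_lower_bound:
  assumes "1 \<le> m" "m \<le> n" "2 \<le> n"
    and P: "is_clique_partition {0..<n} (Kn_minus_Km_edge n m) \<C>"
  shows "real (m * n) - real (m^2 * (m - 1)) / real (n - 1) \<le> real (\<Sum>C\<in>\<C>. card C)"
proof -
  let ?M = "{0..<m}" and ?R = "{m..<n}" and ?E = "Kn_minus_Km_edge n m"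
  define l where "l = real m / (real n - 1)"
  define a where "a C = card (C \<inter> ?M)" for C
  define b where "b C = card (C \<inter> ?R)" for C
  have "(\<Sum>C\<in>\<C>. card (?M \<times> ?R \<inter> C \<times> C)) = card (?M \<times> ?R)"
    by (rule sum_card_edge_pairs_clique_partition[OF P]) (auto simp: Kn_minus_Km_edge_def)
  moreover have "?M \<times> ?R \<inter> C \<times> C = (C \<inter> ?M) \<times> (C \<inter> ?R)" for C
    by auto
  ultimately have "(\<Sum>C\<in>\<C>. a C * b C) = m * (n - m)"
    unfolding a_def b_def by (simp add: card_cartesian_product)
  then have cross: "(\<Sum>C\<in>\<C>. real (a C) * real (b C)) = real m * (real n - real m)"
    using assms(2) by (simp flip: of_nat_mult of_nat_sum) (simp add: of_nat_diff)
  have "(\<Sum>C\<in>\<C>. card ((?R \<times> ?R - Id) \<inter> C \<times> C)) = card (?R \<times> ?R - Id)"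
    by (rule sum_card_edge_pairs_clique_partition[OF P]) (auto simp: Kn_minus_Km_edge_def)
  moreover have "(?R \<times> ?R - Id) \<inter> C \<times> C = (C \<inter> ?R) \<times> (C \<inter> ?R) - Id" for C
    by auto
  ultimately have inner_nat: "(\<Sum>C\<in>\<C>. b C * b C - b C) = (n - m) * (n - m) - (n - m)"
    unfolding b_def by (simp add: card_offdiag)
  have inner: "(\<Sum>C\<in>\<C>. real (b C) * real (b C) - real (b C))
      = (real n - real m) * (real n - real m) - (real n - real m)"
  proof -
    have "(\<Sum>C\<in>\<C>. real (b C) * real (b C) - real (b C)) = real (\<Sum>C\<in>\<C>. b C * b C - b C)"
      by (simp only: of_nat_sum of_nat_square_diff_self)
    also have "\<dots> = real (n - m) * real (n - m) - real (n - m)"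
      by (simp only: inner_nat of_nat_square_diff_self)
    finally show ?thesis
      using assms(2) by (simp add: of_nat_diff)
  qed
  have per_clique: "(1 + 2 * l - l^2) * (real (a C) * real (b C))
      - l^2 * (real (b C) * real (b C) - real (b C)) \<le> real (card C)" if "C \<in> \<C>" for C
  proof -
    have clique: "is_clique {0..<n} ?E C"
      using P that by (simp add: is_clique_partition_def)
    then have "C \<subseteq> {0..<n}"
      by (simp add: is_clique_def)
    then have split: "C = (C \<inter> ?M) \<union> (C \<inter> ?R)" and "finite C"
      by (auto intro: finite_subset[of C "{0..<n}"])
    have "card ((C \<inter> ?M) \<union> (C \<inter> ?R)) = a C + b C"
      unfolding a_def b_def by (rule card_Un_disjoint) (use \<open>finite C\<close> in auto)
    then have "card C = a C + b C"
      using split by simp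
    moreover have "a C \<le> 1"
      unfolding a_def by (rule card_clique_Int_independent_le_1[OF clique])
        (simp add: Kn_minus_Km_edge_def)
    ultimately show ?thesis
      using clique_size_quadratic_bound[of "a C" l "b C"] by simp
  qed
  have "(1 + 2 * l - l^2) * (real m * (real n - real m))
      - l^2 * ((real n - real m) * (real n - real m) - (real n - real m))
      \<le> (\<Sum>C\<in>\<C>. real (card C))"
    unfolding cross[symmetric] inner[symmetric] sum_distrib_left sum_subtractf[symmetric]
    by (rule sum_mono) (rule per_clique)
  moreover have "real n - 1 \<noteq> 0"
    using assms(3) by simp
  ultimately show ?thesis
    using lower_bound_identity[of "real n - 1" "real m"] assms(1,3)
    by (simp add: l_def of_nat_diff)
qed

definition Kn_minus_Km_partition :: "nat \<Rightarrow> nat \<Rightarrow> nat set set" where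
  "Kn_minus_Km_partition n m =
     insert (insert 0 {m..<n}) ((\<lambda>(i, j). {i, j}) ` ({1..<m} \<times> {m..<n}))"

lemma mem_Kn_minus_Km_partition:
  "C \<in> Kn_minus_Km_partition n m \<longleftrightarrow>
     C = insert 0 {m..<n} \<or> (\<exists>i j. C = {i, j} \<and> 1 \<le> i \<and> i < m \<and> m \<le> j \<and> j < n)"
  unfolding Kn_minus_Km_partition_def by auto

lemma is_clique_partition_Kn_minus_Km_partition:
  assumes "1 \<le> m" "m \<le> n"
  shows "is_clique_partition {0..<n} (Kn_minus_Km_edge n m) (Kn_minus_Km_partition n m)"
  unfolding is_clique_partition_def
proof (intro conjI ballI impI)
  fix C assume "C \<in> Kn_minus_Km_partition n m"
  then show "is_clique {0..<n} (Kn_minus_Km_edge n m) C"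
    using assms unfolding mem_Kn_minus_Km_partition is_clique_def Kn_minus_Km_edge_def by auto
next
  fix u v assume "u \<in> {0..<n}" "v \<in> {0..<n}" "Kn_minus_Km_edge n m u v"
  then have e: "u < n" "v < n" "u \<noteq> v" "\<not> (u < m \<and> v < m)"
    unfolding Kn_minus_Km_edge_def by auto
  show "\<exists>!C. C \<in> Kn_minus_Km_partition n m \<and> u \<in> C \<and> v \<in> C"
  proof (cases "u \<in> insert 0 {m..<n} \<and> v \<in> insert 0 {m..<n}")
    case True
    then show ?thesis
      using e assms unfolding mem_Kn_minus_Km_partition
      by (intro ex1I[of _ "insert 0 {m..<n}"]) auto
  next
    case False
    then obtain i j where "{u, v} = {i, j}" "1 \<le> i" "i < m" "m \<le> j" "j < n"
      using e that[of u v] that[of v u] by (cases "u < m") (auto simp: insert_commute)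
    then show ?thesis
      unfolding mem_Kn_minus_Km_partition by (intro ex1I[of _ "{i, j}"]) (auto simp: doubleton_eq_iff)
  qed
qed

lemma sum_card_Kn_minus_Km_partition:
  assumes "1 \<le> m" "m \<le> n"
  shows "(\<Sum>C\<in>Kn_minus_Km_partition n m. card C) = (2 * m - 1) * (n - m) + 1"
proof -
  let ?pair = "\<lambda>(i::nat, j::nat). {i, j}" and ?P = "{1..<m} \<times> {m..<n}"
  have inj: "inj_on ?pair ?P"
    by (auto intro!: inj_onI simp: doubleton_eq_iff)
  have "0 \<notin> C" if "C \<in> ?pair ` ?P" for C
    using that by clarsimp
  then have "insert 0 {m..<n} \<notin> ?pair ` ?P"
    using insertI1 by metis
  then have "(\<Sum>C\<in>Kn_minus_Km_partition n m. card C)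
      = card (insert 0 {m..<n}) + (\<Sum>C\<in>?pair ` ?P. card C)"
    unfolding Kn_minus_Km_partition_def by simp
  also have "(\<Sum>C\<in>?pair ` ?P. card C) = (\<Sum>x\<in>?P. card (?pair x))"
    by (rule sum.reindex[OF inj, unfolded comp_def])
  also have "(\<Sum>x\<in>?P. card (?pair x)) = (\<Sum>x\<in>?P. 2)"
    by (rule sum.cong) auto
  also have "card (insert 0 {m..<n}) + (\<Sum>x\<in>?P. 2) = (n - m) + 1 + 2 * ((m - 1) * (n - m))"
    using assms by simp
  also have "\<dots> = (2 * m - 1) * (n - m) + 1"
    using assms by (cases m) (simp_all add: algebra_simps)
  finally show ?thesis .
qed

theorem mainTheorem7:
  fixes m n :: nat
  assumes "1 \<le> m" and "m \<le> n" and "2 \<le> n"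
  shows "real (m * n) - real (m^2 * (m - 1)) / real (n - 1)
           \<le> real (scp {0..<n} (Kn_minus_Km_edge n m))
       \<and> scp {0..<n} (Kn_minus_Km_edge n m) \<le> (2 * m - 1) * (n - m) + 1"
proof
  have partition: "is_clique_partition {0..<n} (Kn_minus_Km_edge n m) (Kn_minus_Km_partition n m)"
    using assms(1,2) by (rule is_clique_partition_Kn_minus_Km_partition)
  then obtain \<C> where "is_clique_partition {0..<n} (Kn_minus_Km_edge n m) \<C>"
    and "scp {0..<n} (Kn_minus_Km_edge n m) = (\<Sum>C\<in>\<C>. card C)"
    by (rule scp_attained)
  then show "real (m * n) - real (m^2 * (m - 1)) / real (n - 1)
      \<le> real (scp {0..<n} (Kn_minus_Km_edge n m))"
    using Kn_minus_Km_clique_partition_lower_bound[OF assms] by simp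
  show "scp {0..<n} (Kn_minus_Km_edge n m) \<le> (2 * m - 1) * (n - m) + 1"
    using scp_le[OF partition] sum_card_Kn_minus_Km_partition[OF assms(1,2)] by simp
qed

end
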